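(* Let $U_3=(\mathbb{N},F_3)$ where $F_3=\{l_i:i\in\mathbb{N}\setminus\{0\}\}$ and, for $i\ge 1$, $j\in\mathbb{N}$, $l_i(j)=0$ if $j\le i$ and $l_i(j)=1$ if $j>i$. Then $\operatorname{typ}_u(Tab(U_3),h)=t_3$, where $h$ is the depth and $t_3$ is the table with rows (indexed $i,d,a$; entries in columns $i,d,a$) $(\gamma,\epsilon,\epsilon)$, $(\beta,\gamma,\epsilon)$, $(\alpha,\alpha,\alpha)$.
   Context: Let $\mathbb{N}=\{0,1,2,\dots\}$; for $k\ge 2$, $E_k=\{0,\dots,k-1\}$; $\mathcal{P}(\mathbb{N})$ is the set of nonempty finite subsets of $\mathbb{N}$. For a nonempty set $F$, a decision table $T\in\mathcal{M}_k(F)$ is a rectangular table with $n\ge1$ columns labeled with attributes $f_1,\dots,f_n\in F$ (columns with the same label are equal), whose rows are pairwise different tuples in $E_k^n$ (possibly none), each row labeled with a set from $\mathcal{P}(\mathbb{N})$; $At(T)=\{f_1,\dots,f_n\}$, $\Delta(T)$ the set of rows; for a word $\alpha=(f_{i_1},\delta_1)\cdots(f_{i_m},\delta_m)$, $T\alpha$ is the subtable of rows with value $\delta_j$ in column $f_{i_j}$ for all $j$. Information system: $U=(A,F)$ with $A$ nonempty and $F$ a nonempty set of functions $A\to E_k$ (here $k=2$). A problem over $U$ is $z=(\nu,f_1,\dots,f_n)$ with $n\ge1$, $\nu:E_k^n\to\mathcal{P}(\mathbb{N})$, $f_1,\dots,f_n\in F$. Its table $T(z)\in\mathcal{M}_k(F)$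 has columns labeled $f_1,\dots,f_n$; $\bar\delta\in E_k^n$ is a row iff there is $x\in A$ with $f_j(x)=\delta_j$ for all $j$, and it is labeled $\nu(\bar\delta)$. $Tab(U)=\{T(z): z \text{ a problem over } U\}$ (a closed class, i.e. closed under removal of columns (keeping the first of equal rows), arbitrary changing of decision sets, permutation and duplication of columns). Decision trees over $\mathcal{M}_k(F)$: finite rooted directed trees with at least two nodes; root and edges leaving the root unlabeled; worker nodes (neither root nor terminal) labeled by attributes in $F$; edges leaving worker nodes labeled by elements of $E_k$; terminal nodes labeled by numbers in $\mathbb{N}$. For a complete path $\xi$, $\pi(\xi)$ is the word of pairs (attribute of worker node, label of leaving edge) along $\xi$, $\varphi(\xi)$ the word of those attributes, $\tau(\xi)$ the terminal label. A nondeterministic decision tree for $T$ uses only attributes in $At(T)$, satisfies $\bigcup_\xi\Delta(T\pi(\xi))=\Delta(T)$, and for every row $r\in\Delta(T\pi(\xi))$, $\tau(\xi)$ lies in the decision set of $r$. It is deterministic if exactly one edge leaves the root and edges leaving each worker node have distinct labels. The depth of a word is its length $h(\alpha)=|\alpha|$; $h(\Gamma)=\max_\xi h(\varphi(\xi))$. For $T$ with columns $f_1,\dots,f_n$: $h^i(T)=n$, $h^d(T)$ and $h^a(T)$ are the minimum depths of deterministic, respectively nondeterministic, decision trees for $T$. For $b,c\in\{i,d,a\}$ and a class $\mathcal{C}$, $\mathcal{U}^{bc}_{\mathcal{C}h}(n)=\max\{h^b(T):T\in\mathcal{C},h^c(T)\le n\}$ (defined iff this set is nonempty and finite). For a partial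 $g:\mathbb{N}\to\mathbb{N}$, $\mathrm{Dom}^+(g)=\{n\in\mathrm{Dom}(g):g(n)\ge n\}$, $\mathrm{Dom}^-(g)=\{n\in\mathrm{Dom}(g):g(n)\le n\}$; $\operatorname{typ}(g)$ is $\alpha$ if $\mathrm{Dom}(g)$ is infinite and $g$ bounded above; $\beta$ if $\mathrm{Dom}(g)$ infinite, $\mathrm{Dom}^+(g)$ finite, $g$ unbounded; $\gamma$ if $\mathrm{Dom}^+(g)$ and $\mathrm{Dom}^-(g)$ are infinite; $\delta$ if $\mathrm{Dom}(g)$ infinite and $\mathrm{Dom}^-(g)$ finite; $\epsilon$ if $\mathrm{Dom}(g)$ finite. $\operatorname{typ}_u(\mathcal{C},h)$ is the $3\times3$ table (rows and columns indexed $i,d,a$) with entry $\operatorname{typ}(\mathcal{U}^{bc}_{\mathcal{C}h})$ in row $b$, column $c$. *)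

theory Defs
  imports Main
begin

datatype 'f dtable = DT (cols: "'f list") (rows: "nat list set") (dec: "nat list \<Rightarrow> nat set")

definition sub_rows :: "'f dtable \<Rightarrow> ('f \<times> nat) list \<Rightarrow> nat list set" where
  "sub_rows T \<alpha> = {r \<in> rows T. \<forall>(f,\<delta>) \<in> set \<alpha>.
      \<forall>j < length (cols T). cols T ! j = f \<longrightarrow> r ! j = \<delta>}"

text \<open>A tree is the (nonempty)
list of children of the unlabelled root.\<close>

datatype 'f dnode = Term nat | Work 'f "(nat \<times> 'f dnode) list"

type_synonym 'f dtree = "'f dnode list"

inductive wf_node :: "nat \<Rightarrow> 'f set \<Rightarrow> 'f dnode \<Rightarrow> bool" for k F where
  "wf_node k F (Term m)"
| "f \<in> F \<Longrightarrow> es \<noteq> [] \<Longrightarrow> \<forall>\<delta> t. (\<delta>, t) \<in> set es \<longrightarrow> \<delta> < k \<and> wf_node k F t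
    \<Longrightarrow> wf_node k F (Work f es)"

inductive det_node :: "'f dnode \<Rightarrow> bool" where
  "det_node (Term m)"
| "distinct (map fst es) \<Longrightarrow> \<forall>\<delta> t. (\<delta>, t) \<in> set es \<longrightarrow> det_node t
    \<Longrightarrow> det_node (Work f es)"

text \<open>node_path t p m: a path from t to a terminal node; p = pi(xi), m = tau(xi).\<close>
inductive node_path :: "'f dnode \<Rightarrow> ('f \<times> nat) list \<Rightarrow> nat \<Rightarrow> bool" where
  "node_path (Term m) [] m"
| "(\<delta>, t) \<in> set es \<Longrightarrow> node_path t p m \<Longrightarrow> node_path (Work f es) ((f, \<delta>) # p) m"

definition tree_path :: "'f dtree \<Rightarrow> ('f \<times> nat) list \<Rightarrow> nat \<Rightarrow> bool" where
  "tree_path \<Gamma> p m \<longleftrightarrow> (\<exists>t \<in> set \<Gamma>. node_path t p m)"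

definition wf_tree :: "nat \<Rightarrow> 'f set \<Rightarrow> 'f dtree \<Rightarrow> bool" where
  "wf_tree k F \<Gamma> \<longleftrightarrow> \<Gamma> \<noteq> [] \<and> (\<forall>t \<in> set \<Gamma>. wf_node k F t)"

definition det_tree :: "'f dtree \<Rightarrow> bool" where
  "det_tree \<Gamma> \<longleftrightarrow> length \<Gamma> = 1 \<and> (\<forall>t \<in> set \<Gamma>. det_node t)"

definition tree_depth :: "'f dtree \<Rightarrow> nat" where
  "tree_depth \<Gamma> = Max {length p | p m. tree_path \<Gamma> p m}"

definition is_ndt :: "nat \<Rightarrow> 'f dtable \<Rightarrow> 'f dtree \<Rightarrow> bool" where
  "is_ndt k T \<Gamma> \<longleftrightarrow> wf_tree k (set (cols T)) \<Gamma>
     \<and> (\<Union>{sub_rows T p | p m. tree_path \<Gamma> p m}) = rows T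
     \<and> (\<forall>p m. tree_path \<Gamma> p m \<longrightarrow> (\<forall>r \<in> sub_rows T p. m \<in> dec T r))"

definition is_dt :: "nat \<Rightarrow> 'f dtable \<Rightarrow> 'f dtree \<Rightarrow> bool" where
  "is_dt k T \<Gamma> \<longleftrightarrow> is_ndt k T \<Gamma> \<and> det_tree \<Gamma>"

definition h_i :: "'f dtable \<Rightarrow> nat" where
  "h_i T = length (cols T)"

definition h_d :: "nat \<Rightarrow> 'f dtable \<Rightarrow> nat" where
  "h_d k T = (LEAST h. \<exists>\<Gamma>. is_dt k T \<Gamma> \<and> tree_depth \<Gamma> = h)"

definition h_a :: "nat \<Rightarrow> 'f dtable \<Rightarrow> nat" where
  "h_a k T = (LEAST h. \<exists>\<Gamma>. is_ndt k T \<Gamma> \<and> tree_depth \<Gamma> = h)"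

definition prob_table :: "'a set \<Rightarrow> ('a \<Rightarrow> nat) list \<Rightarrow> (nat list \<Rightarrow> nat set) \<Rightarrow> ('a \<Rightarrow> nat) dtable" where
  "prob_table A fs \<nu> = DT fs {map (\<lambda>f. f x) fs | x. x \<in> A} \<nu>"

definition Tab :: "nat \<Rightarrow> 'a set \<Rightarrow> ('a \<Rightarrow> nat) set \<Rightarrow> ('a \<Rightarrow> nat) dtable set" where
  "Tab k A F = {prob_table A fs \<nu> | fs \<nu>. fs \<noteq> [] \<and> set fs \<subseteq> F \<and>
      (\<forall>\<delta>. length \<delta> = length fs \<and> set \<delta> \<subseteq> {..<k} \<longrightarrow> finite (\<nu> \<delta>) \<and> \<nu> \<delta> \<noteq> {})}"

definition Ufun :: "'t set \<Rightarrow> ('t \<Rightarrow> nat) \<Rightarrow> ('t \<Rightarrow> nat) \<Rightarrow> nat \<Rightarrow> nat option" where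
  "Ufun C hb hc n = (let S = {hb T | T. T \<in> C \<and> hc T \<le> n} in
      if S \<noteq> {} \<and> finite S then Some (Max S) else None)"

definition Dom :: "(nat \<Rightarrow> nat option) \<Rightarrow> nat set" where
  "Dom g = {n. g n \<noteq> None}"
definition Dom_plus :: "(nat \<Rightarrow> nat option) \<Rightarrow> nat set" where
  "Dom_plus g = {n. \<exists>m. g n = Some m \<and> m \<ge> n}"
definition Dom_minus :: "(nat \<Rightarrow> nat option) \<Rightarrow> nat set" where
  "Dom_minus g = {n. \<exists>m. g n = Some m \<and> m \<le> n}"
definition bounded_above :: "(nat \<Rightarrow> nat option) \<Rightarrow> bool" where
  "bounded_above g \<longleftrightarrow> (\<exists>B. \<forall>n m. g n = Some m \<longrightarrow> m \<le> B)"

datatype ftype = TAlpha | TBeta | TGamma | TDelta | TEps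

definition typ_of :: "(nat \<Rightarrow> nat option) \<Rightarrow> ftype" where
  "typ_of g =
    (if infinite (Dom g) \<and> bounded_above g then TAlpha
     else if infinite (Dom g) \<and> finite (Dom_plus g) \<and> \<not> bounded_above g then TBeta
     else if infinite (Dom_plus g) \<and> infinite (Dom_minus g) then TGamma
     else if infinite (Dom g) \<and> finite (Dom_minus g) then TDelta
     else if finite (Dom g) then TEps
     else undefined)"

datatype hkind = Ki | Kd | Ka

definition hmeas :: "nat \<Rightarrow> hkind \<Rightarrow> 'f dtable \<Rightarrow> nat" where
  "hmeas k b = (case b of Ki \<Rightarrow> h_i | Kd \<Rightarrow> h_d k | Ka \<Rightarrow> h_a k)"

text \<open>typ_u(C,h): entry in row b, column c.\<close>
definition typ_u :: "nat \<Rightarrow> 'f dtable set \<Rightarrow> hkind \<Rightarrow> hkind \<Rightarrow> ftype" where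
  "typ_u k C b c = typ_of (Ufun C (hmeas k b) (hmeas k c))"

definition l3 :: "nat \<Rightarrow> nat \<Rightarrow> nat" where
  "l3 i j = (if j \<le> i then 0 else 1)"

definition F3 :: "(nat \<Rightarrow> nat) set" where
  "F3 = {l3 i | i. i \<ge> 1}"

definition t3 :: "hkind \<Rightarrow> hkind \<Rightarrow> ftype" where
  "t3 b c = (case (b, c) of
      (Ki, Ki) \<Rightarrow> TGamma | (Ki, Kd) \<Rightarrow> TEps  | (Ki, Ka) \<Rightarrow> TEps
    | (Kd, Ki) \<Rightarrow> TBeta  | (Kd, Kd) \<Rightarrow> TGamma | (Kd, Ka) \<Rightarrow> TEps
    | (Ka, Ki) \<Rightarrow> TAlpha | (Ka, Kd) \<Rightarrow> TAlpha | (Ka, Ka) \<Rightarrow> TAlpha)"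

end

theory Submission
  imports Defs
begin

text \<open>
  Every attribute \<open>l\<^sub>i\<close> of \<open>U\<^sub>3\<close> is a threshold test, so a row of a table over \<open>U\<^sub>3\<close> only
  records on which side of each of the finitely many thresholds of its columns the argument lies.
  Testing the sorted thresholds two at a time yields a deterministic tree of depth at most
  \<open>h\<^sup>i/2 + 1\<close>, and guessing the interval of the argument and checking its two neighbouring
  thresholds yields a nondeterministic tree of depth at most 2; so \<open>2 h\<^sup>d \<le> h\<^sup>i + 2\<close> and
  \<open>h\<^sup>a \<le> min h\<^sup>d 2\<close>. Conversely, tables with a constant decision have \<open>h\<^sup>d = 0\<close> and any
  \<open>h\<^sup>i\<close>, while the table with columns \<open>l\<^sub>1, \<dots>, l\<^sub>m\<close> that labels each row with its number of
  ones forces \<open>m + 1\<close> distinct leaves, hence \<open>2 ^ h\<^sup>d > m\<close>. The nine entries of the table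
  follow from these four facts.
\<close>

section \<open>Paths and depth of decision trees\<close>

lemma node_path_Term_iff [simp]: "node_path (Term m) p e \<longleftrightarrow> p = [] \<and> e = m"
  by (auto elim: node_path.cases intro: node_path.intros)

lemma node_path_Work_iff [simp]:
  "node_path (Work f es) p e \<longleftrightarrow> (\<exists>\<delta> t q. (\<delta>, t) \<in> set es \<and> p = (f, \<delta>) # q \<and> node_path t q e)"
  by (blast elim: node_path.cases intro: node_path.intros)

lemma finite_node_paths: "finite {(p, e). node_path t p e}"
proof (induction t)
  case (Work f es)
  have "{(p, e). node_path (Work f es) p e} =
      (\<Union>(\<delta>, t) \<in> set es. (\<lambda>(q, e). ((f, \<delta>) # q, e)) ` {(q, e). node_path t q e})"
    by auto
  with Work show ?case by (auto simp: prod_set_simps)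
qed simp

lemma wf_node_has_path: "wf_node k F t \<Longrightarrow> \<exists>p e. node_path t p e"
proof (induction t rule: wf_node.induct)
  case (2 f es)
  then obtain \<delta> t where "(\<delta>, t) \<in> set es" by (cases es) auto
  with 2 show ?case by fastforce
qed simp

lemma wf_node_path_attrs:
  "node_path t p e \<Longrightarrow> wf_node k F t \<Longrightarrow> \<forall>(f, \<delta>) \<in> set p. f \<in> F \<and> \<delta> < k"
proof (induction t p e rule: node_path.induct)
  case (2 \<delta> t es p m f)
  from \<open>wf_node k F (Work f es)\<close> \<open>(\<delta>, t) \<in> set es\<close> have "f \<in> F" "\<delta> < k" "wf_node k F t"
    by (auto elim: wf_node.cases)
  with 2 show ?case by auto
qed simp

lemma wf_tree_path_attrs:
  "wf_tree k F \<Gamma> \<Longrightarrow> tree_path \<Gamma> p m \<Longrightarrow> (f, \<delta>) \<in> set p \<Longrightarrow> f \<in> F \<and> \<delta> < k"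
  unfolding wf_tree_def tree_path_def using wf_node_path_attrs by fastforce

lemma finite_tree_path_lengths: "finite {length p | p m. tree_path \<Gamma> p m}"
proof -
  have "{length p | p m. tree_path \<Gamma> p m} = (length \<circ> fst) ` (\<Union>t \<in> set \<Gamma>. {(p, e). node_path t p e})"
    by (force simp: tree_path_def)
  then show ?thesis by (simp add: finite_node_paths)
qed

lemma tree_path_length_le_depth: "tree_path \<Gamma> p m \<Longrightarrow> length p \<le> tree_depth \<Gamma>"
  unfolding tree_depth_def using finite_tree_path_lengths by (intro Max_ge) auto

lemma tree_depth_le:
  assumes "wf_tree k F \<Gamma>" and "\<And>p m. tree_path \<Gamma> p m \<Longrightarrow> length p \<le> B"
  shows "tree_depth \<Gamma> \<le> B"
proof -
  obtain t where "t \<in> set \<Gamma>" "wf_node k F t"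
    using assms(1) unfolding wf_tree_def by (cases \<Gamma>) auto
  then obtain p e where "tree_path \<Gamma> p e"
    using wf_node_has_path unfolding tree_path_def by blast
  then show ?thesis
    unfolding tree_depth_def using finite_tree_path_lengths assms(2) by (subst Max_le_iff) auto
qed

lemma card_node_labels_le:
  shows "0 < k \<Longrightarrow> wf_node k F t \<Longrightarrow> det_node t \<Longrightarrow> (\<And>p e. node_path t p e \<Longrightarrow> length p \<le> d) \<Longrightarrow>
    card {e. \<exists>p. node_path t p e} \<le> k ^ d"
proof (induction t arbitrary: d)
  case (Work f es)
  from Work.prems(2) have es: "es \<noteq> []" "\<And>\<delta> t. (\<delta>, t) \<in> set es \<Longrightarrow> \<delta> < k \<and> wf_node k F t"
    by (auto elim: wf_node.cases)
  from Work.prems(3) have dist: "distinct (map fst es)" and det: "\<And>\<delta> t. (\<delta>, t) \<in> set es \<Longrightarrow> det_node t"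
    by (auto elim: det_node.cases)
  obtain \<delta>0 t0 where "(\<delta>0, t0) \<in> set es" using es(1) by (cases es) auto
  then obtain p0 e0 where "node_path (Work f es) ((f, \<delta>0) # p0) e0"
    using es(2) wf_node_has_path by fastforce
  with Work.prems(4) obtain d' where d': "d = Suc d'" by (cases d) fastforce+
  have "length es = card (fst ` set es)" using distinct_card[OF dist] by simp
  also have "\<dots> \<le> card {..<k}" using es(2) by (intro card_mono) auto
  finally have length_es: "length es \<le> k" by simp
  have child: "card {e. \<exists>p. node_path t p e} \<le> k ^ d'" if "(\<delta>, t) \<in> set es" for \<delta> t
  proof (rule Work.IH)
    show "t \<in> Basic_BNFs.snds (\<delta>, t)" by simp
    show "node_path t p e \<Longrightarrow> length p \<le> d'" for p e
      using Work.prems(4)[of "(f, \<delta>) # p" e] that d' by auto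
  qed (use that es det Work.prems(1) in auto)
  have "{e. \<exists>p. node_path (Work f es) p e} = (\<Union>x \<in> set es. {e. \<exists>p. node_path (snd x) p e})"
    by force
  also have "card \<dots> \<le> (\<Sum>x \<in> set es. card {e. \<exists>p. node_path (snd x) p e})"
    by (rule card_UN_le) simp
  also have "\<dots> \<le> (\<Sum>x \<in> set es. k ^ d')" by (rule sum_mono) (use child in force)
  also have "\<dots> \<le> length es * k ^ d'" using card_length[of es] by simp
  also have "\<dots> \<le> k ^ d" using length_es d' by simp
  finally show ?case .
qed simp

lemma h_d_le_depth: "is_dt k T \<Gamma> \<Longrightarrow> h_d k T \<le> tree_depth \<Gamma>"
  unfolding h_d_def by (rule Least_le) blast

lemma h_a_le_depth: "is_ndt k T \<Gamma> \<Longrightarrow> h_a k T \<le> tree_depth \<Gamma>"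
  unfolding h_a_def by (rule Least_le) blast

lemma h_d_attained: "is_dt k T \<Gamma> \<Longrightarrow> \<exists>\<Gamma>'. is_dt k T \<Gamma>' \<and> tree_depth \<Gamma>' = h_d k T"
  unfolding h_d_def by (rule LeastI_ex) blast

lemma h_a_le_h_d: "is_dt k T \<Gamma> \<Longrightarrow> h_a k T \<le> h_d k T"
  using h_d_attained h_a_le_depth unfolding is_dt_def by metis

lemma is_ndt_row_decided:
  assumes "is_ndt k T \<Gamma>" "r \<in> rows T"
  shows "\<exists>p m. tree_path \<Gamma> p m \<and> m \<in> dec T r"
proof -
  from assms obtain p m where "tree_path \<Gamma> p m" "r \<in> sub_rows T p"
    unfolding is_ndt_def by blast
  with assms(1) show ?thesis unfolding is_ndt_def by blast
qed

lemma card_decisions_le_pow_h_d: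
  assumes "0 < k" "is_dt k T \<Gamma>" and E: "\<And>e. e \<in> E \<Longrightarrow> \<exists>r \<in> rows T. dec T r = {e}"
  shows "card E \<le> k ^ h_d k T"
proof -
  obtain \<Gamma>' where \<Gamma>': "is_dt k T \<Gamma>'" "tree_depth \<Gamma>' = h_d k T"
    using h_d_attained[OF assms(2)] by blast
  then obtain t where t: "\<Gamma>' = [t]" "wf_node k (set (cols T)) t" "det_node t"
    unfolding is_dt_def is_ndt_def det_tree_def wf_tree_def by (auto simp: length_Suc_conv)
  have "E \<subseteq> {e. \<exists>p. node_path t p e}"
    using E is_ndt_row_decided \<Gamma>'(1) t(1) unfolding is_dt_def tree_path_def by fastforce
  moreover have "finite {e. \<exists>p. node_path t p e}"
    using finite_imageI[OF finite_node_paths, of snd t] by (simp add: image_def)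
  ultimately have "card E \<le> card {e. \<exists>p. node_path t p e}" by (rule card_mono[rotated])
  also have "\<dots> \<le> k ^ tree_depth \<Gamma>'"
  proof (rule card_node_labels_le[OF assms(1) t(2,3)])
    show "node_path t p e \<Longrightarrow> length p \<le> tree_depth \<Gamma>'" for p e
      using tree_path_length_le_depth[of \<Gamma>' p e] t(1) by (simp add: tree_path_def)
  qed
  finally show ?thesis using \<Gamma>'(2) by simp
qed

lemma h_d_eq_0_if_common_decision:
  fixes T :: "'f dtable"
  assumes "\<And>r. r \<in> rows T \<Longrightarrow> m \<in> dec T r"
  shows "h_d k T = 0"
proof -
  have paths: "tree_path [Term m] p e \<longleftrightarrow> p = [] \<and> e = m" for p e
    by (simp add: tree_path_def)
  have wf: "wf_tree k (set (cols T)) [Term m]"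
    by (simp add: wf_tree_def wf_node.intros)
  have "is_dt k T [Term m]"
    using assms wf unfolding is_dt_def is_ndt_def det_tree_def paths
    by (auto simp: sub_rows_def intro: det_node.intros)
  moreover have "tree_depth ([Term m] :: 'f dtree) = 0"
    using tree_depth_le[OF wf, of 0] by (simp add: paths)
  ultimately show ?thesis using h_d_le_depth by fastforce
qed

section \<open>Tables of problems\<close>

definition row :: "('a \<Rightarrow> nat) list \<Rightarrow> 'a \<Rightarrow> nat list" where
  "row fs x = map (\<lambda>f. f x) fs"

lemma prob_table_simps [simp]:
  "cols (prob_table A fs \<nu>) = fs"
  "rows (prob_table A fs \<nu>) = row fs ` A"
  "dec (prob_table A fs \<nu>) = \<nu>"
  by (auto simp: prob_table_def row_def)

abbreviation follows :: "'a \<Rightarrow> (('a \<Rightarrow> nat) \<times> nat) list \<Rightarrow> bool" where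
  "follows y p \<equiv> \<forall>(f, \<delta>) \<in> set p. f y = \<delta>"

lemma sub_rows_prob_table:
  "r \<in> sub_rows (prob_table A fs \<nu>) p \<longleftrightarrow>
    (\<exists>y \<in> A. r = row fs y \<and> (\<forall>(f, \<delta>) \<in> set p. f \<in> set fs \<longrightarrow> f y = \<delta>))"
  unfolding sub_rows_def by (auto simp: row_def in_set_conv_nth) blast+

lemma is_ndt_prob_tableI:
  assumes wf: "wf_tree k (set fs) \<Gamma>"
    and complete: "\<And>y. y \<in> A \<Longrightarrow> \<exists>p m. tree_path \<Gamma> p m \<and> follows y p"
    and sound: "\<And>p m y. tree_path \<Gamma> p m \<Longrightarrow> y \<in> A \<Longrightarrow> follows y p \<Longrightarrow> m \<in> \<nu> (row fs y)"
  shows "is_ndt k (prob_table A fs \<nu>) \<Gamma>"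
proof -
  let ?T = "prob_table A fs \<nu>"
  have follows_iff: "(\<forall>(f, \<delta>) \<in> set p. f \<in> set fs \<longrightarrow> f y = \<delta>) \<longleftrightarrow> follows y p"
    if "tree_path \<Gamma> p m" for p m y
    using wf_tree_path_attrs[OF wf that] by fast
  have "rows ?T \<subseteq> \<Union>{sub_rows ?T p | p m. tree_path \<Gamma> p m}"
  proof
    fix r assume "r \<in> rows ?T"
    then obtain y where y: "y \<in> A" "r = row fs y" by auto
    then obtain p m where p: "tree_path \<Gamma> p m" "follows y p" using complete by blast
    then have "r \<in> sub_rows ?T p" using y unfolding sub_rows_prob_table by fast
    with p(1) show "r \<in> \<Union>{sub_rows ?T p | p m. tree_path \<Gamma> p m}" by blast
  qed
  then have cover: "\<Union>{sub_rows ?T p | p m. tree_path \<Gamma> p m} = rows ?T"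
    by (auto simp: sub_rows_def)
  have decided: "m \<in> dec ?T r" if "tree_path \<Gamma> p m" "r \<in> sub_rows ?T p" for p m r
  proof -
    from that(2) obtain y where y: "y \<in> A" "r = row fs y"
      "\<forall>(f, \<delta>) \<in> set p. f \<in> set fs \<longrightarrow> f y = \<delta>"
      unfolding sub_rows_prob_table by blast
    then show ?thesis using sound[OF that(1) y(1)] follows_iff[OF that(1)] by simp
  qed
  show ?thesis unfolding is_ndt_def prob_table_simps(1) using wf cover decided by blast
qed

section \<open>Types of the functions \<open>U\<^sup>b\<^sup>c\<close>\<close>

lemma Ufun_SomeD:
  assumes "Ufun C hb hc n = Some m"
  shows "\<exists>T \<in> C. hc T \<le> n \<and> hb T = m"
proof -
  let ?S = "{hb T | T. T \<in> C \<and> hc T \<le> n}"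
  from assms have "?S \<noteq> {}" "finite ?S" "m = Max ?S"
    unfolding Ufun_def Let_def by (auto split: if_splits)
  then have "m \<in> ?S" using Max_in by blast
  then show ?thesis by blast
qed

lemma Ufun_eq_Some_ge:
  fixes hb :: "'t \<Rightarrow> nat"
  assumes "\<And>T. T \<in> C \<Longrightarrow> hc T \<le> n \<Longrightarrow> hb T \<le> B" "T \<in> C" "hc T \<le> n"
  shows "\<exists>m. Ufun C hb hc n = Some m \<and> hb T \<le> m"
proof -
  let ?S = "{hb T | T. T \<in> C \<and> hc T \<le> n}"
  have "?S \<subseteq> {..B}" using assms(1) by auto
  then have "finite ?S" by (rule finite_subset) simp
  moreover have "hb T \<in> ?S" using assms(2,3) by blast
  ultimately show ?thesis unfolding Ufun_def Let_def by auto
qed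

lemma Ufun_eq_None: "infinite {hb T | T. T \<in> C \<and> hc T \<le> n} \<Longrightarrow> Ufun C hb hc n = None"
  unfolding Ufun_def Let_def by auto

lemma typ_of_Ufun_diagonal:
  fixes h :: "'t \<Rightarrow> nat"
  assumes "infinite (h ` C)"
  shows "typ_of (Ufun C h h) = TGamma"
proof -
  let ?g = "Ufun C h h"
  have fixpoint: "?g (h T) = Some (h T)" if "T \<in> C" for T
    using Ufun_eq_Some_ge[where hb = h and hc = h and n = "h T" and B = "h T"] Ufun_SomeD[of C h h "h T"] that
    by (metis le_antisym order_refl)
  then have "h ` C \<subseteq> Dom_plus ?g" "h ` C \<subseteq> Dom_minus ?g"
    by (auto simp: Dom_plus_def Dom_minus_def)
  then have "infinite (Dom_plus ?g)" "infinite (Dom_minus ?g)"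
    using assms finite_subset by blast+
  moreover have "\<not> bounded_above ?g"
  proof
    assume "bounded_above ?g"
    then obtain B where "\<And>n m. ?g n = Some m \<Longrightarrow> m \<le> B" unfolding bounded_above_def by blast
    then have "h ` C \<subseteq> {..B}" using fixpoint by fastforce
    with assms show False using finite_subset by blast
  qed
  ultimately show ?thesis by (simp add: typ_of_def)
qed

lemma typ_of_Ufun_finite_Dom:
  assumes "S \<subseteq> C" "\<And>T. T \<in> S \<Longrightarrow> hc T \<le> n\<^sub>0" "infinite (hb ` S)"
  shows "typ_of (Ufun C hb hc) = TEps"
proof -
  have "Ufun C hb hc n = None" if "n\<^sub>0 \<le> n" for n
  proof (rule Ufun_eq_None)
    have "hb ` S \<subseteq> {hb T | T. T \<in> C \<and> hc T \<le> n}" using assms(1,2) that by force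
    then show "infinite {hb T | T. T \<in> C \<and> hc T \<le> n}" using assms(3) finite_subset by blast
  qed
  then have "Dom (Ufun C hb hc) \<subseteq> {..<n\<^sub>0}"
    unfolding Dom_def by (metis (mono_tags) lessThan_iff mem_Collect_eq not_le subsetI)
  then have "finite (Dom (Ufun C hb hc))" by (rule finite_subset) simp
  moreover have "Dom_plus (Ufun C hb hc) \<subseteq> Dom (Ufun C hb hc)"
    by (auto simp: Dom_plus_def Dom_def)
  ultimately show ?thesis by (simp add: typ_of_def finite_subset)
qed

lemma typ_of_Ufun_bounded:
  assumes "\<And>T. T \<in> C \<Longrightarrow> hb T \<le> B" "T\<^sub>0 \<in> C"
  shows "typ_of (Ufun C hb hc) = TAlpha"
proof -
  have "{hc T\<^sub>0..} \<subseteq> Dom (Ufun C hb hc)"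
  proof
    fix n assume "n \<in> {hc T\<^sub>0..}"
    then show "n \<in> Dom (Ufun C hb hc)"
      using Ufun_eq_Some_ge[of C hc n hb B T\<^sub>0] assms by (auto simp: Dom_def)
  qed
  then have "infinite (Dom (Ufun C hb hc))" using infinite_Ici finite_subset by blast
  moreover have "bounded_above (Ufun C hb hc)"
    unfolding bounded_above_def using Ufun_SomeD assms(1) by metis
  ultimately show ?thesis by (simp add: typ_of_def)
qed

lemma typ_of_Ufun_sublinear:
  fixes hb :: "'t \<Rightarrow> nat"
  assumes half: "\<And>T. T \<in> C \<Longrightarrow> 2 * hb T \<le> hc T + 2" and "infinite (hb ` C)"
  shows "typ_of (Ufun C hb hc) = TBeta"
proof -
  let ?g = "Ufun C hb hc"
  have defined: "\<exists>m. ?g n = Some m \<and> hb T \<le> m" if "T \<in> C" "hc T \<le> n" for T n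
  proof (rule Ufun_eq_Some_ge[where B = "n + 2"])
    show "hb T' \<le> n + 2" if "T' \<in> C" "hc T' \<le> n" for T'
      using half[OF that(1)] that(2) by linarith
  qed fact+
  obtain T\<^sub>0 where "T\<^sub>0 \<in> C" using assms(2) by fastforce
  then have "{hc T\<^sub>0..} \<subseteq> Dom ?g" using defined by (auto simp: Dom_def)
  then have "infinite (Dom ?g)" using infinite_Ici finite_subset by blast
  moreover have "Dom_plus ?g \<subseteq> {..2}"
  proof
    fix n assume "n \<in> Dom_plus ?g"
    then obtain T where "T \<in> C" "hc T \<le> n" "n \<le> hb T"
      unfolding Dom_plus_def using Ufun_SomeD by blast
    with half show "n \<in> {..2}" by fastforce
  qed
  then have "finite (Dom_plus ?g)" by (rule finite_subset) simp
  moreover have "\<not> bounded_above ?g"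
  proof
    assume "bounded_above ?g"
    then obtain B where "\<And>n m. ?g n = Some m \<Longrightarrow> m \<le> B" unfolding bounded_above_def by blast
    then have "hb ` C \<subseteq> {..B}" using defined by fastforce
    with assms(2) show False using finite_subset by blast
  qed
  ultimately show ?thesis by (simp add: typ_of_def)
qed

section \<open>Tables over \<open>U\<^sub>3\<close>\<close>

lemma l3_eq_0_iff [simp]: "l3 c y = 0 \<longleftrightarrow> y \<le> c"
  and l3_eq_1_iff [simp]: "l3 c y = Suc 0 \<longleftrightarrow> c < y"
  and l3_less_2 [simp]: "l3 c y < 2"
  by (auto simp: l3_def)

lemma l3_eq_l3_iff: "l3 c y = l3 c z \<longleftrightarrow> (y \<le> c \<longleftrightarrow> z \<le> c)"
  by (simp add: l3_def)

lemma inj_l3: "inj l3"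
proof (rule injI)
  fix a b assume "l3 a = l3 b"
  then have "l3 a a = l3 b a" "l3 a b = l3 b b" by auto
  then show "a = b" by (auto simp: l3_def split: if_splits)
qed

definition thresholds :: "(nat \<Rightarrow> nat) list \<Rightarrow> nat set" where
  "thresholds fs = {c. l3 c \<in> set fs}"

lemma finite_thresholds: "finite (thresholds fs)"
  unfolding thresholds_def using finite_vimageI[OF finite_set inj_l3] by (simp add: vimage_def)

lemma card_thresholds_le: "card (thresholds fs) \<le> length fs"
proof -
  have "card (thresholds fs) = card (l3 ` thresholds fs)"
    using inj_l3 by (simp add: card_image inj_on_def inj_def)
  also have "\<dots> \<le> card (set fs)" by (intro card_mono) (auto simp: thresholds_def)
  also have "\<dots> \<le> length fs" by (rule card_length)
  finally show ?thesis .
qed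

lemma thresholds_nonempty: "fs \<noteq> [] \<Longrightarrow> set fs \<subseteq> F3 \<Longrightarrow> thresholds fs \<noteq> {}"
  by (cases fs) (auto simp: thresholds_def F3_def)

lemma row_eq_if_same_side:
  assumes "set fs \<subseteq> F3" "\<And>c. c \<in> thresholds fs \<Longrightarrow> y \<le> c \<longleftrightarrow> z \<le> c"
  shows "row fs y = row fs z"
  unfolding row_def
proof (rule map_cong[OF refl])
  fix f assume "f \<in> set fs"
  then obtain c where "f = l3 c" "c \<in> thresholds fs"
    using assms(1) by (auto simp: F3_def thresholds_def)
  then show "f y = f z" using assms(2) l3_eq_l3_iff by blast
qed

lemma Tab_U3E:
  assumes "T \<in> Tab 2 UNIV F3"
  obtains fs \<nu> D where "T = prob_table UNIV fs \<nu>" "fs \<noteq> []" "set fs \<subseteq> F3" "\<And>z. D z \<in> \<nu> (row fs z)"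
proof -
  from assms obtain fs \<nu> where T: "T = prob_table UNIV fs \<nu>" "fs \<noteq> []" "set fs \<subseteq> F3"
    and \<nu>: "\<And>\<delta>. length \<delta> = length fs \<Longrightarrow> set \<delta> \<subseteq> {..<2} \<Longrightarrow> \<nu> \<delta> \<noteq> {}"
    unfolding Tab_def by blast
  have "set (row fs z) \<subseteq> {..<2}" for z
    using T(3) by (auto simp: row_def F3_def)
  then have "\<nu> (row fs z) \<noteq> {}" for z
    using \<nu> by (simp add: row_def)
  then have "(SOME e. e \<in> \<nu> (row fs z)) \<in> \<nu> (row fs z)" for z
    by (simp add: some_in_eq)
  with T show thesis by (rule that)
qed

lemma is_ndt_U3I:
  assumes "set fs \<subseteq> F3" "\<And>z. D z \<in> \<nu> (row fs z)" "wf_tree 2 (set fs) \<Gamma>"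
    and complete: "\<And>y. \<exists>p m. tree_path \<Gamma> p m \<and> follows y p"
    and sound: "\<And>p m y. tree_path \<Gamma> p m \<Longrightarrow> follows y p \<Longrightarrow>
      \<exists>z. m = D z \<and> (\<forall>c \<in> thresholds fs. y \<le> c \<longleftrightarrow> z \<le> c)"
  shows "is_ndt 2 (prob_table UNIV fs \<nu>) \<Gamma>"
proof (rule is_ndt_prob_tableI[OF assms(3) complete])
  fix p m y assume "tree_path \<Gamma> p m" "follows y p"
  then obtain z where "m = D z" "\<forall>c \<in> thresholds fs. y \<le> c \<longleftrightarrow> z \<le> c" using sound by blast
  then show "m \<in> \<nu> (row fs y)" using assms(2) row_eq_if_same_side[OF assms(1)] by metis
qed

text \<open>
  \<open>threshold_tree D cs x\<close> locates an argument \<open>y \<ge> x\<close> among the sorted thresholds \<open>cs \<ge> x\<close> and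
  answers \<open>D z\<close> for a representative \<open>z\<close> of the interval found. Thresholds are consumed in pairs:
  the larger one is tested first, and the smaller one only if \<open>y\<close> lies below the larger, which ends
  the search; whence depth at most \<open>|cs|/2 + 1\<close>.
\<close>

fun threshold_tree :: "(nat \<Rightarrow> nat) \<Rightarrow> nat list \<Rightarrow> nat \<Rightarrow> (nat \<Rightarrow> nat) dnode" where
  "threshold_tree D [] x = Term (D x)"
| "threshold_tree D [c] x = Work (l3 c) [(0, Term (D x)), (1, Term (D (Suc c)))]"
| "threshold_tree D (c\<^sub>1 # c\<^sub>2 # cs) x = Work (l3 c\<^sub>2)
     [(0, Work (l3 c\<^sub>1) [(0, Term (D x)), (1, Term (D (Suc c\<^sub>1)))]),
      (1, threshold_tree D cs (Suc c\<^sub>2))]"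

lemma threshold_tree_sound:
  "node_path (threshold_tree D cs x) p e \<Longrightarrow> sorted_wrt (<) cs \<Longrightarrow> \<forall>c \<in> set cs. x \<le> c \<Longrightarrow>
    x \<le> y \<Longrightarrow> follows y p \<Longrightarrow> \<exists>z \<ge> x. e = D z \<and> (\<forall>c \<in> set cs. y \<le> c \<longleftrightarrow> z \<le> c)"
proof (induction D cs x arbitrary: p e y rule: threshold_tree.induct)
  case (2 D c x)
  then obtain \<delta> where "p = [(l3 c, \<delta>)]" "\<delta> = 0 \<and> e = D x \<or> \<delta> = 1 \<and> e = D (Suc c)" by auto
  with 2 show ?case by (elim disjE; intro exI[of _ x] exI[of _ "Suc c"]) auto
next
  case (3 D c\<^sub>1 c\<^sub>2 cs x)
  have sorted: "c\<^sub>1 < c\<^sub>2" "\<forall>c \<in> set cs. Suc c\<^sub>2 \<le> c" "sorted_wrt (<) cs"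
    using "3.prems"(2) by (auto simp: Suc_le_eq)
  from "3.prems"(1) obtain \<delta> t q where
    branch: "\<delta> = 0 \<and> t = Work (l3 c\<^sub>1) [(0, Term (D x)), (1, Term (D (Suc c\<^sub>1)))] \<or>
             \<delta> = 1 \<and> t = threshold_tree D cs (Suc c\<^sub>2)"
    and p: "p = (l3 c\<^sub>2, \<delta>) # q" and q: "node_path t q e" by auto
  from branch show ?case
  proof (elim disjE conjE)
    assume "\<delta> = 0" "t = Work (l3 c\<^sub>1) [(0, Term (D x)), (1, Term (D (Suc c\<^sub>1)))]"
    with q p "3.prems"(5) obtain \<delta>' where "y \<le> c\<^sub>2" "l3 c\<^sub>1 y = \<delta>'"
      "\<delta>' = 0 \<and> e = D x \<or> \<delta>' = 1 \<and> e = D (Suc c\<^sub>1)" by auto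
    then show ?thesis using sorted "3.prems"(3,4)
      by (elim disjE; intro exI[of _ x] exI[of _ "Suc c\<^sub>1"]) auto
  next
    assume "\<delta> = 1" and t: "t = threshold_tree D cs (Suc c\<^sub>2)"
    with p "3.prems"(5) have "c\<^sub>2 < y" "follows y q" by auto
    have "\<exists>z \<ge> Suc c\<^sub>2. e = D z \<and> (\<forall>c \<in> set cs. y \<le> c \<longleftrightarrow> z \<le> c)"
      by (rule "3.IH"[OF _ sorted(3,2)]) (use q t \<open>c\<^sub>2 < y\<close> \<open>follows y q\<close> in auto)
    then obtain z where "z \<ge> Suc c\<^sub>2" "e = D z" "\<forall>c \<in> set cs. y \<le> c \<longleftrightarrow> z \<le> c" by blast
    then show ?thesis using sorted \<open>c\<^sub>2 < y\<close> "3.prems"(3) by (intro exI[of _ z]) auto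
  qed
qed auto

lemma threshold_tree_complete: "x \<le> y \<Longrightarrow> \<exists>p e. node_path (threshold_tree D cs x) p e \<and> follows y p"
proof (induction D cs x rule: threshold_tree.induct)
  case (2 D c x)
  show ?case
    by (cases "y \<le> c") (auto intro!: exI[of _ "[(l3 c, l3 c y)]"])
next
  case (3 D c\<^sub>1 c\<^sub>2 cs x)
  show ?case
  proof (cases "y \<le> c\<^sub>2")
    case True
    then show ?thesis
      by (cases "y \<le> c\<^sub>1") (auto intro!: exI[of _ "[(l3 c\<^sub>2, 0), (l3 c\<^sub>1, l3 c\<^sub>1 y)]"])
  next
    case False
    then obtain p e where "node_path (threshold_tree D cs (Suc c\<^sub>2)) p e" "follows y p"
      using "3.IH" by auto
    with False show ?thesis by (intro exI[of _ "(l3 c\<^sub>2, 1) # p"] exI[of _ e]) auto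
  qed
qed auto

lemma wf_threshold_tree: "\<forall>c \<in> set cs. l3 c \<in> F \<Longrightarrow> wf_node 2 F (threshold_tree D cs x)"
  by (induction D cs x rule: threshold_tree.induct) (auto intro!: wf_node.intros)

lemma det_threshold_tree: "det_node (threshold_tree D cs x)"
  by (induction D cs x rule: threshold_tree.induct) (auto intro!: det_node.intros)

lemma threshold_tree_path_length:
  "node_path (threshold_tree D cs x) p e \<Longrightarrow> 2 * length p \<le> length cs + 2"
proof (induction D cs x arbitrary: p e rule: threshold_tree.induct)
  case (3 D c\<^sub>1 c\<^sub>2 cs x)
  then show ?case by fastforce
qed auto

lemma Tab_U3_shallow_dt:
  assumes "T \<in> Tab 2 UNIV F3"
  shows "\<exists>\<Gamma>. is_dt 2 T \<Gamma> \<and> 2 * tree_depth \<Gamma> \<le> h_i T + 2"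
proof -
  obtain fs \<nu> D where T: "T = prob_table UNIV fs \<nu>" "set fs \<subseteq> F3" and D: "\<And>z. D z \<in> \<nu> (row fs z)"
    using assms by (elim Tab_U3E) blast
  define cs where "cs = sorted_list_of_set (thresholds fs)"
  have cs: "set cs = thresholds fs" "sorted_wrt (<) cs" "length cs \<le> length fs"
    using finite_thresholds card_thresholds_le by (auto simp: cs_def)
  define \<Gamma> where "\<Gamma> = [threshold_tree D cs 0]"
  have paths: "tree_path \<Gamma> p m \<longleftrightarrow> node_path (threshold_tree D cs 0) p m" for p m
    by (simp add: tree_path_def \<Gamma>_def)
  have wf: "wf_tree 2 (set fs) \<Gamma>"
    using cs(1) by (auto simp: wf_tree_def \<Gamma>_def thresholds_def intro: wf_threshold_tree)
  have "is_ndt 2 T \<Gamma>"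
    unfolding T(1)
  proof (rule is_ndt_U3I[where D = D, OF T(2) D wf])
    show "\<exists>p m. tree_path \<Gamma> p m \<and> follows y p" for y
      using threshold_tree_complete[of 0 y] paths by simp
    show "\<exists>z. m = D z \<and> (\<forall>c \<in> thresholds fs. y \<le> c \<longleftrightarrow> z \<le> c)"
      if "tree_path \<Gamma> p m" "follows y p" for p m y
      using threshold_tree_sound[of D cs 0 p m y] that cs by (auto simp: paths)
  qed
  then have "is_dt 2 T \<Gamma>"
    by (simp add: is_dt_def det_tree_def \<Gamma>_def det_threshold_tree)
  moreover have "2 * tree_depth \<Gamma> \<le> h_i T + 2"
  proof -
    have "tree_depth \<Gamma> \<le> (length fs + 2) div 2"
      using wf threshold_tree_path_length cs(3) by (intro tree_depth_le) (fastforce simp: paths)+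
    then show ?thesis by (simp add: h_i_def T(1))
  qed
  ultimately show ?thesis by blast
qed

lemma h_d_Tab_U3_le: "T \<in> Tab 2 UNIV F3 \<Longrightarrow> 2 * h_d 2 T \<le> h_i T + 2"
  using Tab_U3_shallow_dt h_d_le_depth by fastforce

lemma h_a_Tab_U3_le_h_d: "T \<in> Tab 2 UNIV F3 \<Longrightarrow> h_a 2 T \<le> h_d 2 T"
  using Tab_U3_shallow_dt h_a_le_h_d by blast

definition threshold_below :: "nat set \<Rightarrow> nat \<Rightarrow> nat" where
  "threshold_below S x = (if \<exists>c \<in> S. c < x then Max {c \<in> S. c < x} else Min S)"

definition threshold_above :: "nat set \<Rightarrow> nat \<Rightarrow> nat" where
  "threshold_above S x = (if \<exists>c \<in> S. x \<le> c then Min {c \<in> S. x \<le> c} else Max S)"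

lemma threshold_below_in: "finite S \<Longrightarrow> S \<noteq> {} \<Longrightarrow> threshold_below S x \<in> S"
  unfolding threshold_below_def using Max_in[of "{c \<in> S. c < x}"] by auto

lemma threshold_above_in: "finite S \<Longrightarrow> S \<noteq> {} \<Longrightarrow> threshold_above S x \<in> S"
  unfolding threshold_above_def using Min_in[of "{c \<in> S. x \<le> c}"] by auto

lemma same_side_if_same_side_of_neighbours:
  assumes "finite S" "c \<in> S"
    and below: "y \<le> threshold_below S x \<longleftrightarrow> x \<le> threshold_below S x"
    and above: "y \<le> threshold_above S x \<longleftrightarrow> x \<le> threshold_above S x"
  shows "y \<le> c \<longleftrightarrow> x \<le> c"
proof (cases "c < x")
  case True
  let ?L = "{c \<in> S. c < x}"
  have "finite ?L" "c \<in> ?L" using assms(1,2) True by auto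
  then have "c \<le> Max ?L" "Max ?L \<in> ?L" using Max_ge Max_in by blast+
  moreover have "threshold_below S x = Max ?L" using \<open>c \<in> ?L\<close> by (auto simp: threshold_below_def)
  ultimately show ?thesis using True below by auto
next
  case False
  let ?U = "{c \<in> S. x \<le> c}"
  have "finite ?U" "c \<in> ?U" using assms(1,2) False by auto
  then have "Min ?U \<le> c" "Min ?U \<in> ?U" using Min_le Min_in by blast+
  moreover have "threshold_above S x = Min ?U" using \<open>c \<in> ?U\<close> by (auto simp: threshold_above_def)
  ultimately show ?thesis using False above by auto
qed

definition neighbour_test :: "nat set \<Rightarrow> (nat \<Rightarrow> nat) \<Rightarrow> nat \<Rightarrow> (nat \<Rightarrow> nat) dnode" where
  "neighbour_test S D x =
    (let a = threshold_below S x; b = threshold_above S x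
     in Work (l3 a) [(l3 a x, Work (l3 b) [(l3 b x, Term (D x))])])"

lemma node_path_neighbour_test:
  "node_path (neighbour_test S D x) p e \<longleftrightarrow>
    p = [(l3 (threshold_below S x), l3 (threshold_below S x) x),
         (l3 (threshold_above S x), l3 (threshold_above S x) x)] \<and> e = D x"
  by (auto simp: neighbour_test_def Let_def)

lemma same_side_representative:
  "finite S \<Longrightarrow> \<exists>x < Max S + 2. \<forall>c \<in> S. y \<le> c \<longleftrightarrow> (x::nat) \<le> c"
  by (intro exI[of _ "min y (Suc (Max S))"]) (auto dest: Max_ge)

lemma Tab_U3_depth_2_ndt:
  assumes "T \<in> Tab 2 UNIV F3"
  shows "\<exists>\<Gamma>. is_ndt 2 T \<Gamma> \<and> tree_depth \<Gamma> \<le> 2"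
proof -
  obtain fs \<nu> D where T: "T = prob_table UNIV fs \<nu>" "fs \<noteq> []" "set fs \<subseteq> F3"
    and D: "\<And>z. D z \<in> \<nu> (row fs z)"
    using assms by (elim Tab_U3E) blast
  define S where "S = thresholds fs"
  have S: "finite S" "S \<noteq> {}"
    using finite_thresholds thresholds_nonempty[OF T(2,3)] by (auto simp: S_def)
  define \<Gamma> where "\<Gamma> = map (neighbour_test S D) [0..<Max S + 2]"
  have paths: "tree_path \<Gamma> p m \<longleftrightarrow> (\<exists>x < Max S + 2. node_path (neighbour_test S D x) p m)" for p m
    by (auto simp: tree_path_def \<Gamma>_def simp del: upt_Suc)
  have wf: "wf_tree 2 (set fs) \<Gamma>"
    using threshold_below_in[OF S] threshold_above_in[OF S]
    by (auto simp: wf_tree_def \<Gamma>_def neighbour_test_def S_def thresholds_def Let_def intro!: wf_node.intros)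
  have "is_ndt 2 T \<Gamma>"
    unfolding T(1)
  proof (rule is_ndt_U3I[where D = D, OF T(3) D wf])
    fix y
    obtain x where "x < Max S + 2" and x: "\<forall>c \<in> S. y \<le> c \<longleftrightarrow> x \<le> c"
      using same_side_representative[OF S(1)] by blast
    moreover have "follows y [(l3 (threshold_below S x), l3 (threshold_below S x) x),
        (l3 (threshold_above S x), l3 (threshold_above S x) x)]"
      using x threshold_below_in[OF S] threshold_above_in[OF S] by (simp add: l3_eq_l3_iff)
    ultimately show "\<exists>p m. tree_path \<Gamma> p m \<and> follows y p"
      unfolding paths node_path_neighbour_test by blast
  next
    fix p m y assume "tree_path \<Gamma> p m" "follows y p"
    then obtain x where m: "m = D x"
      and neighbours: "y \<le> threshold_below S x \<longleftrightarrow> x \<le> threshold_below S x"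
        "y \<le> threshold_above S x \<longleftrightarrow> x \<le> threshold_above S x"
      unfolding paths node_path_neighbour_test by (auto simp: l3_eq_l3_iff)
    have "y \<le> c \<longleftrightarrow> x \<le> c" if "c \<in> thresholds fs" for c
      using same_side_if_same_side_of_neighbours[OF S(1) _ neighbours] that by (simp add: S_def)
    with m show "\<exists>z. m = D z \<and> (\<forall>c \<in> thresholds fs. y \<le> c \<longleftrightarrow> z \<le> c)" by blast
  qed
  moreover have "tree_depth \<Gamma> \<le> 2"
    using wf by (rule tree_depth_le) (auto simp: paths node_path_neighbour_test)
  ultimately show ?thesis by blast
qed

lemma h_a_Tab_U3_le_2: "T \<in> Tab 2 UNIV F3 \<Longrightarrow> h_a 2 T \<le> 2"
  using Tab_U3_depth_2_ndt h_a_le_depth by fastforce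

lemma infinite_h_i_Tab_U3_h_d_0: "infinite (h_i ` {T \<in> Tab 2 UNIV F3. h_d 2 T = 0})"
proof -
  have "n \<in> h_i ` {T \<in> Tab 2 UNIV F3. h_d 2 T = 0}" if "1 \<le> n" for n
  proof
    let ?T = "prob_table (UNIV :: nat set) (replicate n (l3 1)) (\<lambda>_. {0})"
    have "l3 1 \<in> F3" by (auto simp: F3_def)
    with that show "?T \<in> {T \<in> Tab 2 UNIV F3. h_d 2 T = 0}"
      unfolding Tab_def by (fastforce intro: h_d_eq_0_if_common_decision)
    show "n = h_i ?T" by (simp add: h_i_def)
  qed
  then have "{1..} \<subseteq> h_i ` {T \<in> Tab 2 UNIV F3. h_d 2 T = 0}" by auto
  then show ?thesis using infinite_Ici finite_subset by blast
qed

lemma sum_row_l3: "sum_list (row (map l3 [1..<Suc m]) (Suc j)) = min j m"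
  by (induction m) (auto simp: row_def l3_def)

lemma Tab_U3_h_d_unbounded: "\<exists>T \<in> Tab 2 UNIV F3. B < h_d 2 T"
proof -
  define m :: nat where "m = 2 ^ B"
  define fs where "fs = map l3 [1..<Suc m]"
  define T where "T = prob_table (UNIV :: nat set) fs (\<lambda>\<delta>. {sum_list \<delta>})"
  have "set fs \<subseteq> F3" "fs \<noteq> []" by (auto simp: fs_def F3_def m_def)
  then have T_in: "T \<in> Tab 2 UNIV F3" unfolding Tab_def T_def by fastforce
  then obtain \<Gamma> where "is_dt 2 T \<Gamma>" using Tab_U3_shallow_dt by blast
  moreover have "\<exists>r \<in> rows T. dec T r = {j}" if "j \<in> {0..m}" for j
    using that sum_row_l3[of m j] by (intro bexI[of _ "row fs (Suc j)"]) (auto simp: T_def fs_def)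
  ultimately have "card {0..m} \<le> 2 ^ h_d 2 T"
    by (intro card_decisions_le_pow_h_d) auto
  then have "2 ^ B < (2::nat) ^ h_d 2 T" by (simp add: m_def Suc_le_eq del: power_strict_increasing_iff)
  then show ?thesis using T_in power_less_imp_less_exp[of 2] by fastforce
qed

lemma infinite_h_d_Tab_U3: "infinite (h_d 2 ` Tab 2 UNIV F3)"
  unfolding finite_nat_set_iff_bounded_le using Tab_U3_h_d_unbounded by (meson imageI not_le)

theorem lemma11:
  shows "typ_u 2 (Tab 2 (UNIV :: nat set) F3) = t3"
proof (intro ext)
  let ?C = "Tab 2 (UNIV :: nat set) F3"
  let ?Z = "{T \<in> ?C. h_d 2 T = 0}"
  have h_i_C: "infinite (h_i ` ?C)"
    using infinite_h_i_Tab_U3_h_d_0 finite_subset[of "h_i ` ?Z"] by blast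
  have h_a_Z: "T \<in> ?Z \<Longrightarrow> h_a 2 T \<le> 0" for T
    using h_a_Tab_U3_le_h_d by fastforce
  obtain T\<^sub>0 where "T\<^sub>0 \<in> ?C" using infinite_h_d_Tab_U3 by fastforce
  then have "typ_of (Ufun ?C (h_a 2) h) = TAlpha" for h
    using h_a_Tab_U3_le_2 by (rule typ_of_Ufun_bounded[rotated])
  moreover have "typ_of (Ufun ?C h_i h_i) = TGamma" "typ_of (Ufun ?C (h_d 2) (h_d 2)) = TGamma"
    using h_i_C infinite_h_d_Tab_U3 by (auto intro: typ_of_Ufun_diagonal)
  moreover have "typ_of (Ufun ?C h_i (h_d 2)) = TEps" "typ_of (Ufun ?C h_i (h_a 2)) = TEps"
    using infinite_h_i_Tab_U3_h_d_0 h_a_Z by (auto intro: typ_of_Ufun_finite_Dom[of ?Z])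
  moreover have "typ_of (Ufun ?C (h_d 2) (h_a 2)) = TEps"
    using infinite_h_d_Tab_U3 h_a_Tab_U3_le_2 by (auto intro: typ_of_Ufun_finite_Dom[of ?C])
  moreover have "typ_of (Ufun ?C (h_d 2) h_i) = TBeta"
    using h_d_Tab_U3_le infinite_h_d_Tab_U3 by (rule typ_of_Ufun_sublinear)
  ultimately show "typ_u 2 ?C b c = t3 b c" for b c
    by (cases b; cases c) (simp_all add: typ_u_def hmeas_def t3_def)
qed

end
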